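(* Let $P$ be a finite poset with height function $h$, let $\overline{P}$ be its dual poset, and let $H$ be an integer at least the maximal value of $h$ (so that $H-h$ is a height function on $\overline{P}$). Then for all $n\in\mathbb{Z}$, $$\mathsf{Z}_{\overline{P},H-h}([n]_q)=q^{(n-1)H}\,\sigma\big(\mathsf{Z}_{P,h}([n]_q)\big),$$ where $\sigma$ is the automorphism of $\mathbb{Q}(q)$ replacing $q$ by $1/q$ (applied to the element $\mathsf{Z}_{P,h}([n]_q)\in\mathbb{Q}(q)$).
   Context: $q$ is an indeterminate; $[n]_q=(q^n-1)/(q-1)$ for $n\in\mathbb{Z}$. A height function on a finite poset $R$ is $h:R\to\mathbb{N}$ with $h(x)<h(y)$ whenever $y$ covers $x$. The $q$-Zeta polynomial $\mathsf{Z}_{R,h}\in\mathbb{Q}(q)[x]$ is the unique polynomial with $\mathsf{Z}_{R,h}([n]_q)=\sum_{e_1\le\cdots\le e_{n-1}\text{ in }R}q^{h(e_1)+\cdots+h(e_{n-1})}$ for all $n\ge2$ (it exists, with degree $\max h$; explicitly $\sum_{k\ge1}\sum_{c_1<\cdots<c_k}q^{\sum h(c_i)}\mathsf{E}_{(h(c_1),\dots,h(c_k))}((x-[k+1]_q)/q^{k+1})$ where $\mathsf{E}_a([m]_q)=\sum_{m'\in\mathbb{N}^k,\sum m'_i=m}q^{\sum a_im'_i}$ for $m\ge0$). *)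

theory Defs
  imports Main "HOL-Computational_Algebra.Computational_Algebra" "HOL-Computational_Algebra.Field_as_Ring" "HOL-Computational_Algebra.Normalized_Fraction"
begin

type_synonym ratfun = "rat poly fract"

definition qvar :: ratfun where
  "qvar = to_fract [:0, 1:]"

definition qint :: "int \<Rightarrow> ratfun" where
  "qint n = (qvar powi n - 1) / (qvar - 1)"

definition qsubst_inv :: "rat poly \<Rightarrow> ratfun" where
  "qsubst_inv p = poly (map_poly (\<lambda>c. to_fract [:c:]) p) (inverse qvar)"

definition sigma :: "ratfun \<Rightarrow> ratfun" where
  "sigma x = qsubst_inv (fst (quot_of_fract x)) / qsubst_inv (snd (quot_of_fract x))"

definition covers :: "'a set \<Rightarrow> 'a rel \<Rightarrow> 'a \<Rightarrow> 'a \<Rightarrow> bool" where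
  "covers R r x y \<longleftrightarrow> x \<in> R \<and> y \<in> R \<and> (x, y) \<in> r \<and> x \<noteq> y \<and>
     \<not> (\<exists>z\<in>R. (x, z) \<in> r \<and> (z, y) \<in> r \<and> z \<noteq> x \<and> z \<noteq> y)"

definition height_function :: "'a set \<Rightarrow> 'a rel \<Rightarrow> ('a \<Rightarrow> nat) \<Rightarrow> bool" where
  "height_function R r h \<longleftrightarrow> (\<forall>x y. covers R r x y \<longrightarrow> h x < h y)"

definition multichains :: "'a set \<Rightarrow> 'a rel \<Rightarrow> nat \<Rightarrow> 'a list set" where
  "multichains R r m = {es. length es = m \<and> set es \<subseteq> R \<and> sorted_wrt (\<lambda>x y. (x, y) \<in> r) es}"

definition multichain_sum :: "'a set \<Rightarrow> 'a rel \<Rightarrow> ('a \<Rightarrow> nat) \<Rightarrow> nat \<Rightarrow> ratfun" where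
  "multichain_sum R r h m = (\<Sum>es\<in>multichains R r m. qvar ^ (\<Sum>e\<leftarrow>es. h e))"

definition qZeta :: "'a set \<Rightarrow> 'a rel \<Rightarrow> ('a \<Rightarrow> nat) \<Rightarrow> ratfun poly" where
  "qZeta R r h = (THE Z. \<forall>n::nat. n \<ge> 2 \<longrightarrow>
       poly Z (qint (int n)) = multichain_sum R r h (n - 1))"

end

theory Submission
  imports Defs
begin

(* Grouping multichains by their last element x gives the recursion
   E_x(m+1) = q^h(x) * sum_{y <= x} E_y(m).  As h strictly increases along the order,
   induction on h(x) solves it in the form E_x(m) = sum_{j <= h(x)} c_j q^(jm), so every
   multichain sum is a combination sum_{j <= H} c_j q^(jm) for m >= 1.  Since
   q^n = 1 + (q - 1)[n]_q, the value of such a combination at m = n - 1 is the value at [n]_q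
   of an explicit polynomial, which is therefore the q-Zeta polynomial, and its value at [n]_q
   is given by the same formula for every integer n.  Reversing multichains turns the sums of
   (dual P, H - h) into q^(mH) sigma of those of (P, h), i.e. replaces c_j q^(jm) by
   sigma(c_j) q^((H-j)m); comparing the two explicit polynomials at [n]_q gives the identity. *)

abbreviation const_ratfun :: "rat \<Rightarrow> ratfun" where
  "const_ratfun c \<equiv> to_fract [:c:]"

lemma qvar_nonzero: "qvar \<noteq> 0"
  by (simp add: qvar_def)

lemma qvar_power_eq_iff: "qvar ^ i = qvar ^ j \<longleftrightarrow> i = j"
proof
  have monom: "qvar ^ n = to_fract (monom 1 n)" for n
    by (induction n) (simp_all add: qvar_def monom_Suc flip: to_fract_mult)
  assume "qvar ^ i = qvar ^ j"
  then have "coeff (monom (1::rat) i) i = coeff (monom 1 j) i"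
    by (simp add: monom)
  then show "i = j"
    by (simp split: if_splits)
qed simp

lemma qvar_neq_1: "qvar \<noteq> 1"
  using qvar_power_eq_iff[of 1 0] by simp

lemma qint_affine_eq_powi: "1 + (qvar - 1) * qint n = qvar powi n"
  using qvar_neq_1 by (simp add: qint_def)

lemma qint_of_nat_eq_iff: "qint (int a) = qint (int b) \<longleftrightarrow> a = b"
  using qvar_neq_1 by (simp add: qint_def qvar_power_eq_iff)

lemma qsubst_inv_pCons: "qsubst_inv (pCons a p) = const_ratfun a + inverse qvar * qsubst_inv p"
  by (simp add: qsubst_inv_def map_poly_pCons)

lemma qsubst_inv_0 [simp]: "qsubst_inv 0 = 0"
  by (simp add: qsubst_inv_def)

lemma qsubst_inv_const [simp]: "qsubst_inv [:a:] = const_ratfun a"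
  by (simp add: qsubst_inv_pCons)

lemma qsubst_inv_1 [simp]: "qsubst_inv 1 = 1"
  using qsubst_inv_const[of 1] by (simp add: pCons_one)

lemma qsubst_inv_add: "qsubst_inv (p + q) = qsubst_inv p + qsubst_inv q"
proof (induction p arbitrary: q rule: pCons_induct)
  case (pCons a p)
  then show ?case
    by (cases q rule: pCons_cases) (simp add: qsubst_inv_pCons algebra_simps flip: to_fract_add)
qed simp

lemma qsubst_inv_smult: "qsubst_inv (smult a p) = const_ratfun a * qsubst_inv p"
  by (induction p rule: pCons_induct)
    (simp_all add: qsubst_inv_pCons algebra_simps flip: to_fract_mult)

lemma qsubst_inv_mult: "qsubst_inv (p * q) = qsubst_inv p * qsubst_inv q"
  by (induction p rule: pCons_induct)
    (simp_all add: qsubst_inv_pCons qsubst_inv_add qsubst_inv_smult algebra_simps)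

lemma poly_map_const_ratfun_qvar: "poly (map_poly const_ratfun p) qvar = to_fract p"
proof (induction p rule: pCons_induct)
  case (pCons a p)
  have "to_fract (pCons a p) = const_ratfun a + qvar * to_fract p"
    by (simp add: qvar_def flip: to_fract_add to_fract_mult)
  with pCons show ?case
    by (simp add: map_poly_pCons)
qed simp

text \<open>\<open>q\<^sup>d p(1/q)\<close> with \<open>d = deg p\<close> is the reflected polynomial of \<open>p\<close>,
  which is nonzero.\<close>
lemma qsubst_inv_eq_0_iff [simp]: "qsubst_inv p = 0 \<longleftrightarrow> p = 0"
proof
  assume "qsubst_inv p = 0"
  have "degree (map_poly const_ratfun p) = degree p"
    by (rule degree_map_poly) simp
  then have "reflect_poly (map_poly const_ratfun p) = map_poly const_ratfun (reflect_poly p)"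
    by (intro poly_eqI) (simp add: coeff_reflect_poly coeff_map_poly)
  then have "to_fract (reflect_poly p) = qvar ^ degree p * qsubst_inv p"
    using poly_reflect_poly_nz[OF qvar_nonzero, of "map_poly const_ratfun p"]
    by (simp add: poly_map_const_ratfun_qvar qsubst_inv_def degree_map_poly)
  with \<open>qsubst_inv p = 0\<close> show "p = 0"
    by simp
qed simp

lemma sigma_Fract: "b \<noteq> 0 \<Longrightarrow> sigma (Fract a b) = qsubst_inv a / qsubst_inv b"
proof -
  assume "b \<noteq> 0"
  obtain a' b' where quot: "quot_of_fract (Fract a b) = (a', b')"
    by (cases "quot_of_fract (Fract a b)")
  then have "b' \<noteq> 0"
    using snd_quot_of_fract_nonzero[of "Fract a b"] by simp
  moreover have "Fract a' b' = Fract a b"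
    using Fract_quot_of_fract[of "Fract a b"] quot by simp
  ultimately have "qsubst_inv a' * qsubst_inv b = qsubst_inv a * qsubst_inv b'"
    using \<open>b \<noteq> 0\<close> by (simp add: eq_fract flip: qsubst_inv_mult)
  with quot \<open>b \<noteq> 0\<close> \<open>b' \<noteq> 0\<close> show ?thesis
    by (simp add: sigma_def field_simps)
qed

lemma sigma_add: "sigma (x + y) = sigma x + sigma y"
proof (induction x rule: Fract_induct)
  case (Fract a b)
  show ?case
  proof (induction y rule: Fract_induct)
    case (Fract c d)
    with \<open>b \<noteq> 0\<close> show ?case
      by (simp add: sigma_Fract qsubst_inv_add qsubst_inv_mult field_simps)
  qed
qed

lemma sigma_mult: "sigma (x * y) = sigma x * sigma y"
proof (induction x rule: Fract_induct)
  case (Fract a b)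
  show ?case
  proof (induction y rule: Fract_induct)
    case (Fract c d)
    with \<open>b \<noteq> 0\<close> show ?case
      by (simp add: sigma_Fract qsubst_inv_mult)
  qed
qed

lemma sigma_0 [simp]: "sigma 0 = 0"
  by (simp add: sigma_def)

lemma sigma_1 [simp]: "sigma 1 = 1"
  by (simp add: sigma_def)

lemma sigma_sum: "sigma (\<Sum>x\<in>A. f x) = (\<Sum>x\<in>A. sigma (f x))"
  by (induction A rule: infinite_finite_induct) (simp_all add: sigma_add)

lemma sigma_inverse: "sigma (inverse x) = inverse (sigma x)"
proof (cases "x = 0")
  case False
  then have "sigma x * sigma (inverse x) = 1"
    by (simp flip: sigma_mult)
  then show ?thesis
    by (metis inverse_unique)
qed simp

lemma sigma_qvar: "sigma qvar = inverse qvar"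
proof -
  have "sigma (Fract [:0, 1:] 1) = inverse qvar"
    by (simp add: sigma_Fract qsubst_inv_pCons pCons_one)
  then show ?thesis
    by (simp add: qvar_def to_fract_def)
qed

lemma sigma_qvar_power: "sigma (qvar ^ n) = inverse (qvar ^ n)"
  by (induction n) (simp_all add: sigma_mult sigma_qvar)

lemma sigma_qvar_powi: "sigma (qvar powi k) = qvar powi (- k)"
  by (simp add: power_int_def sigma_inverse sigma_qvar_power power_inverse)

lemma qZeta_eqI:
  assumes "\<forall>n::nat. n \<ge> 2 \<longrightarrow> poly Z (qint (int n)) = multichain_sum R r h (n - 1)"
  shows "qZeta R r h = Z"
  unfolding qZeta_def
proof (rule the_equality)
  fix Z' assume Z': "\<forall>n::nat. n \<ge> 2 \<longrightarrow> poly Z' (qint (int n)) = multichain_sum R r h (n - 1)"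
  have "(\<lambda>n. qint (int n)) ` {2..} \<subseteq> {x. poly (Z' - Z) x = 0}"
    using Z' assms by auto
  moreover have "infinite ((\<lambda>n. qint (int n)) ` {2::nat..})"
    by (simp add: finite_image_iff inj_on_def qint_of_nat_eq_iff infinite_Ici)
  ultimately show "Z' = Z"
    using poly_roots_finite[of "Z' - Z"] finite_subset by auto
qed (fact assms)

definition qpower_sum_poly :: "'i set \<Rightarrow> ('i \<Rightarrow> ratfun) \<Rightarrow> ('i \<Rightarrow> nat) \<Rightarrow> ratfun poly" where
  "qpower_sum_poly J c e = (\<Sum>j\<in>J. smult (c j * qvar powi - int (e j)) ([:1, qvar - 1:] ^ e j))"

lemma poly_qpower_sum_poly_qint:
  "poly (qpower_sum_poly J c e) (qint n) = (\<Sum>j\<in>J. c j * qvar powi (int (e j) * (n - 1)))"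
proof -
  have "poly ([:1, qvar - 1:] ^ k) (qint n) = (qvar powi n) ^ k" for k
    using qint_affine_eq_powi[of n] by (simp add: ac_simps)
  moreover have "qvar powi - int k * (qvar powi n) ^ k = qvar powi (int k * (n - 1))" for k
    using qvar_nonzero by (simp add: algebra_simps power_int_diff power_int_power' power_int_minus_divide)
  ultimately show ?thesis
    by (simp add: qpower_sum_poly_def poly_sum mult.assoc del: poly_power)
qed

lemma qZeta_eq_qpower_sum_poly:
  assumes "\<forall>m\<ge>1. multichain_sum R r h m = (\<Sum>j\<in>J. c j * qvar ^ (e j * m))"
  shows "qZeta R r h = qpower_sum_poly J c e"
proof (rule qZeta_eqI, intro allI impI)
  fix n :: nat assume "n \<ge> 2"
  then have "qvar powi (int (e j) * (int n - 1)) = qvar ^ (e j * (n - 1))" for j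
    by (simp add: of_nat_diff flip: power_int_of_nat)
  then show "poly (qpower_sum_poly J c e) (qint (int n)) = multichain_sum R r h (n - 1)"
    using assms \<open>n \<ge> 2\<close> by (simp add: poly_qpower_sum_poly_qint)
qed

lemma qvar_powi_times_sigma_monomial:
  "qvar powi (m * H) * sigma (c * qvar powi (k * m)) = sigma c * qvar powi ((H - k) * m)"
  using qvar_nonzero
  by (simp add: sigma_mult sigma_qvar_powi algebra_simps flip: power_int_add)

lemma poly_qpower_sum_poly_dual:
  assumes "\<forall>j\<in>J. int (e j) \<le> H"
  shows "poly (qpower_sum_poly J (\<lambda>j. sigma (c j)) (\<lambda>j. nat (H - int (e j)))) (qint n)
    = qvar powi ((n - 1) * H) * sigma (poly (qpower_sum_poly J c e) (qint n))"
  using assms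
  by (simp add: poly_qpower_sum_poly_qint sigma_sum sum_distrib_left qvar_powi_times_sigma_monomial)

lemma qvar_powi_times_sigma_qpower_sum:
  assumes "\<forall>j\<in>J. int (e j) \<le> H"
  shows "qvar powi (int m * H) * sigma (\<Sum>j\<in>J. c j * qvar ^ (e j * m))
    = (\<Sum>j\<in>J. sigma (c j) * qvar ^ (nat (H - int (e j)) * m))"
proof -
  have "qvar powi (int m * H) * sigma (c j * qvar ^ (e j * m)) = sigma (c j) * qvar ^ (nat (H - int (e j)) * m)"
    if j: "j \<in> J" for j
  proof -
    obtain k where k: "H - int (e j) = int k"
      using assms j nonneg_int_cases[of "H - int (e j)"] by auto
    then show ?thesis
      using qvar_powi_times_sigma_monomial[of "int m" H "c j" "int (e j)"]
      by (simp add: mult.commute flip: power_int_of_nat)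
  qed
  then show ?thesis
    by (simp add: sigma_sum sum_distrib_left)
qed

definition qpower_combination :: "nat \<Rightarrow> (nat \<Rightarrow> ratfun) \<Rightarrow> bool" where
  "qpower_combination N f \<longleftrightarrow> (\<exists>c. \<forall>m\<ge>1. f m = (\<Sum>j<N. c j * qvar ^ (j * m)))"

lemma qpower_combination_mono:
  assumes "qpower_combination N f" and "N \<le> N'"
  shows "qpower_combination N' f"
proof -
  obtain c where c: "\<forall>m\<ge>1. f m = (\<Sum>j<N. c j * qvar ^ (j * m))"
    using assms(1) by (auto simp: qpower_combination_def)
  have "(\<Sum>j<N. c j * qvar ^ (j * m)) = (\<Sum>j<N'. (if j < N then c j else 0) * qvar ^ (j * m))" for m
    using assms(2) by (intro sum.mono_neutral_cong_left) auto
  with c have "\<forall>m\<ge>1. f m = (\<Sum>j<N'. (if j < N then c j else 0) * qvar ^ (j * m))"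
    by simp
  then show ?thesis
    unfolding qpower_combination_def by auto
qed

lemma qpower_combination_sum:
  assumes "\<And>x. x \<in> A \<Longrightarrow> qpower_combination N (f x)"
  shows "qpower_combination N (\<lambda>m. \<Sum>x\<in>A. f x m)"
proof -
  have "\<forall>x\<in>A. \<exists>c. \<forall>m\<ge>1. f x m = (\<Sum>j<N. c j * qvar ^ (j * m))"
    using assms by (simp add: qpower_combination_def)
  from bchoice[OF this] obtain c where c: "\<forall>x\<in>A. \<forall>m\<ge>1. f x m = (\<Sum>j<N. c x j * qvar ^ (j * m))"
    by blast
  then have "\<forall>m\<ge>1. (\<Sum>x\<in>A. f x m) = (\<Sum>j<N. (\<Sum>x\<in>A. c x j) * qvar ^ (j * m))"
    by (simp add: sum_distrib_right sum.swap[of _ A])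
  then show ?thesis
    unfolding qpower_combination_def by auto
qed

text \<open>Solving the recurrence: the new exponent \<open>a\<close> differs from all exponents \<open>j < a\<close> of the
  inhomogeneous part, so each \<open>q\<^sup>j\<^sup>m\<close> there has a particular solution \<open>d\<^sub>j q\<^sup>j\<^sup>m\<close>.\<close>
lemma qpower_combination_recurrence:
  assumes "qpower_combination a g" and "\<forall>m\<ge>1. f (Suc m) = qvar ^ a * (f m + g m)"
  shows "qpower_combination (Suc a) f"
proof -
  obtain b where b: "\<forall>m\<ge>1. g m = (\<Sum>j<a. b j * qvar ^ (j * m))"
    using assms(1) by (auto simp: qpower_combination_def)
  define Q where "Q = qvar ^ a"
  define d where "d j = Q * b j / (qvar ^ j - Q)" for j
  define d0 where "d0 = (f 1 - (\<Sum>j<a. d j * qvar ^ j)) / Q"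
  have "Q \<noteq> 0"
    by (simp add: Q_def qvar_nonzero)
  have d: "d j * qvar ^ j = Q * (d j + b j)" if "j < a" for j
  proof -
    have "qvar ^ j - Q \<noteq> 0"
      using that by (simp add: Q_def qvar_power_eq_iff)
    then show ?thesis
      by (simp add: d_def field_simps)
  qed
  have f: "f m = d0 * Q ^ m + (\<Sum>j<a. d j * qvar ^ (j * m))" if "m \<ge> 1" for m
    using that
  proof (induction m rule: nat_induct_at_least)
    case base
    with \<open>Q \<noteq> 0\<close> show ?case
      by (simp add: d0_def)
  next
    case (Suc m)
    have "f (Suc m) = Q * (d0 * Q ^ m + (\<Sum>j<a. d j * qvar ^ (j * m)) + (\<Sum>j<a. b j * qvar ^ (j * m)))"
      using assms(2) b Suc by (simp add: Q_def)
    also have "\<dots> = d0 * Q ^ Suc m + (\<Sum>j<a. Q * (d j + b j) * qvar ^ (j * m))"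
      by (simp add: algebra_simps sum_distrib_left flip: sum.distrib)
    also have "\<dots> = d0 * Q ^ Suc m + (\<Sum>j<a. d j * qvar ^ (j * Suc m))"
      by (intro arg_cong2[where f = "(+)"] refl sum.cong) (simp_all add: d power_add mult_ac)
    finally show ?case .
  qed
  define c where "c j = (if j < a then d j else d0)" for j
  from f have "\<forall>m\<ge>1. f m = (\<Sum>j<Suc a. c j * qvar ^ (j * m))"
    by (simp add: c_def Q_def power_mult add.commute)
  then show ?thesis
    unfolding qpower_combination_def by auto
qed

lemma finite_multichains: "finite R \<Longrightarrow> finite (multichains R r m)"
  by (rule finite_subset[OF _ finite_lists_length_eq[of R m]]) (auto simp: multichains_def)

lemma multichains_converse: "multichains R (r\<inverse>) m = rev ` multichains R r m"
proof (intro set_eqI iffI)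
  fix es assume "es \<in> multichains R (r\<inverse>) m"
  then have "rev es \<in> multichains R r m"
    by (simp add: multichains_def sorted_wrt_rev)
  then show "es \<in> rev ` multichains R r m"
    by (rule image_eqI[rotated]) simp
qed (auto simp: multichains_def sorted_wrt_rev)

lemma multichain_sum_converse:
  assumes "\<forall>x\<in>R. int (h x) \<le> H"
  shows "multichain_sum R (r\<inverse>) (\<lambda>x. nat (H - int (h x))) m
       = qvar powi (int m * H) * sigma (multichain_sum R r h m)"
proof -
  have weight: "int (\<Sum>e\<leftarrow>es. nat (H - int (h e))) = int (length es) * H - int (\<Sum>e\<leftarrow>es. h e)"
    if "set es \<subseteq> R" for es
    using that assms by (induction es) (auto simp: algebra_simps)
  have "qvar ^ (\<Sum>e\<leftarrow>rev es. nat (H - int (h e))) = qvar powi (int m * H) * sigma (qvar ^ (\<Sum>e\<leftarrow>es. h e))"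
    if "es \<in> multichains R r m" for es
  proof -
    have "int (\<Sum>e\<leftarrow>rev es. nat (H - int (h e))) = int m * H + - int (\<Sum>e\<leftarrow>es. h e)"
      using that weight[of es] by (simp add: multichains_def sum_list_rev flip: rev_map)
    then have "qvar ^ (\<Sum>e\<leftarrow>rev es. nat (H - int (h e))) = qvar powi (int m * H + - int (\<Sum>e\<leftarrow>es. h e))"
      by (metis power_int_of_nat)
    also have "\<dots> = qvar powi (int m * H) * sigma (qvar ^ (\<Sum>e\<leftarrow>es. h e))"
      using qvar_nonzero by (simp add: sigma_qvar_power power_int_diff power_int_minus divide_inverse)
    finally show ?thesis .
  qed
  then show ?thesis
    unfolding multichain_sum_def multichains_converse
    by (simp add: sum.reindex sigma_sum sum_distrib_left)
qed

definition multichain_sum_ending_at :: "'a set \<Rightarrow> 'a rel \<Rightarrow> ('a \<Rightarrow> nat) \<Rightarrow> 'a \<Rightarrow> nat \<Rightarrow> ratfun" where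
  "multichain_sum_ending_at R r h x m = (\<Sum>es\<in>{es\<in>multichains R r m. last es = x}. qvar ^ (\<Sum>e\<leftarrow>es. h e))"

lemma multichain_sum_eq_sum_ending_at:
  assumes "finite R" and "m \<ge> 1"
  shows "multichain_sum R r h m = (\<Sum>x\<in>R. multichain_sum_ending_at R r h x m)"
  unfolding multichain_sum_def multichain_sum_ending_at_def
proof (rule sum.group[symmetric, OF finite_multichains[OF assms(1)] assms(1)])
  have "last es \<in> R" if "es \<in> multichains R r m" for es
    using that assms(2) by (cases es rule: rev_cases) (auto simp: multichains_def)
  then show "last ` multichains R r m \<subseteq> R"
    by blast
qed

lemma snoc_in_multichains_iff:
  "es @ [x] \<in> multichains R r (Suc m) \<longleftrightarrow> es \<in> multichains R r m \<and> x \<in> R \<and> (\<forall>y\<in>set es. (y, x) \<in> r)"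
  by (auto simp: multichains_def sorted_wrt_append)

context
  fixes P :: "'a set" and r :: "'a rel"
  assumes finite_P: "finite P" and order: "partial_order_on P r"
begin

private lemma r_refl: "x \<in> P \<Longrightarrow> (x, x) \<in> r"
  using partial_order_onD(1)[OF order] by (simp add: refl_onD)

private lemma r_trans: "(x, y) \<in> r \<Longrightarrow> (y, z) \<in> r \<Longrightarrow> (x, z) \<in> r"
  using partial_order_onD(2)[OF order] by (rule transD)

private lemma r_antisym: "(x, y) \<in> r \<Longrightarrow> (y, x) \<in> r \<Longrightarrow> x = y"
  using partial_order_onD(3)[OF order] by (rule antisymD)

private lemma r_in_P: "(x, y) \<in> r \<Longrightarrow> x \<in> P \<and> y \<in> P"
  using partial_order_onD(4)[OF order] by blast

private lemma interval_psubset: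
  assumes "(x, z) \<in> r" and "(z, y) \<in> r" and "z \<noteq> x" and "z \<noteq> y"
  shows "{w. (x, w) \<in> r \<and> (w, z) \<in> r} \<subset> {w. (x, w) \<in> r \<and> (w, y) \<in> r}"
    and "{w. (z, w) \<in> r \<and> (w, y) \<in> r} \<subset> {w. (x, w) \<in> r \<and> (w, y) \<in> r}"
proof -
  have "(x, y) \<in> r"
    using assms(1,2) by (rule r_trans)
  then have "(x, x) \<in> r" and "(y, y) \<in> r"
    using r_in_P r_refl by blast+
  have "y \<notin> {w. (x, w) \<in> r \<and> (w, z) \<in> r}" and "x \<notin> {w. (z, w) \<in> r \<and> (w, y) \<in> r}"
    using assms r_antisym by blast+
  with \<open>(x, y) \<in> r\<close> \<open>(x, x) \<in> r\<close> \<open>(y, y) \<in> r\<close> assms(1,2)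
  show "{w. (x, w) \<in> r \<and> (w, z) \<in> r} \<subset> {w. (x, w) \<in> r \<and> (w, y) \<in> r}"
    and "{w. (z, w) \<in> r \<and> (w, y) \<in> r} \<subset> {w. (x, w) \<in> r \<and> (w, y) \<in> r}"
    by (auto intro: r_trans)
qed

text \<open>A height function is only required to increase along covering relations; in a finite
  poset every strict relation is a chain of covers, found by splitting intervals.\<close>
lemma height_function_less:
  assumes "height_function P r h" and "(x, y) \<in> r" and "x \<noteq> y"
  shows "h x < h y"
  using assms(2,3)
proof (induction "card {w. (x, w) \<in> r \<and> (w, y) \<in> r}" arbitrary: x y rule: less_induct)
  case less
  show ?case
  proof (cases "covers P r x y")
    case True
    with assms(1) show ?thesis
      by (simp add: height_function_def)
  next
    case False
    with less.prems obtain z where z: "(x, z) \<in> r" "(z, y) \<in> r" "z \<noteq> x" "z \<noteq> y"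
      using r_in_P by (auto simp: covers_def)
    have "finite {w. (x, w) \<in> r \<and> (w, y) \<in> r}"
      using r_in_P by (blast intro: finite_subset[OF _ finite_P])
    with interval_psubset[OF z]
    have "card {w. (x, w) \<in> r \<and> (w, z) \<in> r} < card {w. (x, w) \<in> r \<and> (w, y) \<in> r}"
      and "card {w. (z, w) \<in> r \<and> (w, y) \<in> r} < card {w. (x, w) \<in> r \<and> (w, y) \<in> r}"
      by (simp_all add: psubset_card_mono)
    with less.hyps z have "h x < h z" and "h z < h y"
      by blast+
    then show ?thesis
      by simp
  qed
qed

lemma multichain_below_iff_last_below:
  assumes "es \<in> multichains P r m" and "es \<noteq> []"
  shows "(\<forall>y\<in>set es. (y, x) \<in> r) \<longleftrightarrow> (last es, x) \<in> r"
proof -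
  obtain ys l where es: "es = ys @ [l]"
    using assms(2) rev_exhaust by blast
  with assms(1) have "\<forall>y\<in>set ys. (y, l) \<in> r"
    by (simp add: multichains_def sorted_wrt_append)
  with es show ?thesis
    by (auto intro: r_trans)
qed

lemma multichains_Suc_ending_at:
  assumes "x \<in> P" and "m \<ge> 1"
  shows "{es\<in>multichains P r (Suc m). last es = x}
    = (\<lambda>es. es @ [x]) ` {es\<in>multichains P r m. (last es, x) \<in> r}"
proof (intro set_eqI iffI)
  fix es assume es: "es \<in> {es\<in>multichains P r (Suc m). last es = x}"
  then obtain ys where ys: "es = ys @ [x]"
    by (cases es rule: rev_cases) (auto simp: multichains_def)
  with es have "ys \<in> multichains P r m" and "\<forall>y\<in>set ys. (y, x) \<in> r"
    by (simp_all add: snoc_in_multichains_iff)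
  moreover from this have "ys \<noteq> []"
    using assms(2) by (auto simp: multichains_def)
  ultimately show "es \<in> (\<lambda>es. es @ [x]) ` {es\<in>multichains P r m. (last es, x) \<in> r}"
    using ys multichain_below_iff_last_below by blast
next
  fix es assume "es \<in> (\<lambda>es. es @ [x]) ` {es\<in>multichains P r m. (last es, x) \<in> r}"
  then obtain ys where ys: "es = ys @ [x]" "ys \<in> multichains P r m" "(last ys, x) \<in> r"
    by blast
  moreover from ys(2) have "ys \<noteq> []"
    using assms(2) by (auto simp: multichains_def)
  ultimately show "es \<in> {es\<in>multichains P r (Suc m). last es = x}"
    using assms(1) multichain_below_iff_last_below by (simp add: snoc_in_multichains_iff)
qed

lemma multichain_sum_ending_at_Suc:
  assumes "x \<in> P" and "m \<ge> 1"
  shows "multichain_sum_ending_at P r h x (Suc m)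
    = qvar ^ h x * (\<Sum>y\<in>{y\<in>P. (y, x) \<in> r}. multichain_sum_ending_at P r h y m)"
proof -
  let ?A = "{es\<in>multichains P r m. (last es, x) \<in> r}"
  have "multichain_sum_ending_at P r h x (Suc m) = (\<Sum>es\<in>?A. qvar ^ (\<Sum>e\<leftarrow>es @ [x]. h e))"
    unfolding multichain_sum_ending_at_def multichains_Suc_ending_at[OF assms]
    by (simp add: sum.reindex inj_on_def)
  also have "\<dots> = qvar ^ h x * (\<Sum>es\<in>?A. qvar ^ (\<Sum>e\<leftarrow>es. h e))"
    by (simp add: sum_distrib_left power_add mult.commute)
  also have "(\<Sum>es\<in>?A. qvar ^ (\<Sum>e\<leftarrow>es. h e))
      = (\<Sum>y\<in>{y\<in>P. (y, x) \<in> r}. \<Sum>es\<in>{es\<in>?A. last es = y}. qvar ^ (\<Sum>e\<leftarrow>es. h e))"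
    using finite_P finite_multichains[OF finite_P, of r m] r_in_P
    by (intro sum.group[symmetric]) auto
  also have "\<dots> = (\<Sum>y\<in>{y\<in>P. (y, x) \<in> r}. multichain_sum_ending_at P r h y m)"
    unfolding multichain_sum_ending_at_def by (intro sum.cong) auto
  finally show ?thesis .
qed

lemma qpower_combination_multichain_sum_ending_at:
  assumes "height_function P r h" and "x \<in> P"
  shows "qpower_combination (Suc (h x)) (multichain_sum_ending_at P r h x)"
  using assms(2)
proof (induction "h x" arbitrary: x rule: less_induct)
  case less
  let ?D = "{y\<in>P. (y, x) \<in> r \<and> y \<noteq> x}"
  have "qpower_combination (h x) (multichain_sum_ending_at P r h y)" if "y \<in> ?D" for y
  proof -
    have "h y < h x"
      using that height_function_less[OF assms(1)] by blast
    with that less.hyps show ?thesis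
      by (blast intro: qpower_combination_mono Suc_leI)
  qed
  then have "qpower_combination (h x) (\<lambda>m. \<Sum>y\<in>?D. multichain_sum_ending_at P r h y m)"
    by (rule qpower_combination_sum)
  moreover have "{y\<in>P. (y, x) \<in> r} = insert x ?D"
    using less.prems r_refl by blast
  then have "\<forall>m\<ge>1. multichain_sum_ending_at P r h x (Suc m)
      = qvar ^ h x * (multichain_sum_ending_at P r h x m + (\<Sum>y\<in>?D. multichain_sum_ending_at P r h y m))"
    using less.prems finite_P by (simp add: multichain_sum_ending_at_Suc)
  ultimately show ?case
    by (rule qpower_combination_recurrence)
qed

lemma qpower_combination_multichain_sum:
  assumes "height_function P r h" and "\<forall>x\<in>P. h x < N"
  shows "qpower_combination N (multichain_sum P r h)"
proof -
  have "qpower_combination N (\<lambda>m. \<Sum>x\<in>P. multichain_sum_ending_at P r h x m)"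
    using assms qpower_combination_multichain_sum_ending_at qpower_combination_mono Suc_leI
    by (blast intro: qpower_combination_sum)
  then show ?thesis
    by (simp add: qpower_combination_def multichain_sum_eq_sum_ending_at[OF finite_P])
qed

end

theorem mainTheorem15:
  fixes P :: "'a set" and r :: "'a rel" and h :: "'a \<Rightarrow> nat" and H :: int
  assumes "finite P"
    and "partial_order_on P r"
    and "height_function P r h"
    and "\<forall>x\<in>P. int (h x) \<le> H"
  shows "\<forall>n::int. poly (qZeta P (r\<inverse>) (\<lambda>x. nat (H - int (h x)))) (qint n)
           = qvar powi ((n - 1) * H) * sigma (poly (qZeta P r h) (qint n))"
proof
  fix n :: int
  define N where "N = nat (H + 1)"
  have exponents: "\<forall>j\<in>{..<N}. int j \<le> H"
    by (auto simp: N_def)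
  have "\<forall>x\<in>P. h x < N"
    using assms(4) by (auto simp: N_def)
  from qpower_combination_multichain_sum[OF assms(1-3) this]
  obtain c where c: "\<forall>m\<ge>1. multichain_sum P r h m = (\<Sum>j<N. c j * qvar ^ (j * m))"
    by (auto simp: qpower_combination_def)
  then have "qZeta P r h = qpower_sum_poly {..<N} c (\<lambda>j. j)"
    by (rule qZeta_eq_qpower_sum_poly)
  moreover have "qZeta P (r\<inverse>) (\<lambda>x. nat (H - int (h x)))
      = qpower_sum_poly {..<N} (\<lambda>j. sigma (c j)) (\<lambda>j. nat (H - int j))"
    using c by (intro qZeta_eq_qpower_sum_poly)
      (simp add: multichain_sum_converse[OF assms(4)] qvar_powi_times_sigma_qpower_sum[OF exponents])
  ultimately show "poly (qZeta P (r\<inverse>) (\<lambda>x. nat (H - int (h x)))) (qint n)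
      = qvar powi ((n - 1) * H) * sigma (poly (qZeta P r h) (qint n))"
    by (simp add: poly_qpower_sum_poly_dual[OF exponents])
qed

end
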